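(* Let $\Omega\subset B(\mathcal H)^d$ be an NC domain and $f:\Omega\to B(\mathcal H)^r$ an NC function. If $x,y\in\Omega$ and $L\in B(\mathcal H)$ satisfy $Lx=yL$, then $Lf(x)=f(y)L$.
   Context: Throughout, $\mathcal H$ is an infinite-dimensional separable complex Hilbert space, $B(\mathcal H)$ the bounded operators with the operator norm, and $\mathcal H^{(l)}$ ($l\in\mathbb N\cup\{\infty\}$) the direct sum of $l$ copies of $\mathcal H$. $B(\mathcal H)^d$ has the norm $\|x\|=\max_i\|x^i\|$. Operations on tuples are componentwise: for $L\in B(\mathcal H)$, $Lx=(Lx^1,\dots,Lx^d)$ and $xL=(x^1L,\dots,x^dL)$; for bounded invertible linear $s:\mathcal H\to\mathcal H^{(l)}$ and $z\in B(\mathcal H^{(l)})^d$, $s^{-1}zs=(s^{-1}z^1s,\dots,s^{-1}z^ds)$; for a finite or countable uniformly bounded sequence $x_1,x_2,\dots$ in $B(\mathcal H)^d$ of length $l$, $\bigoplus_n x_n\in B(\mathcal H^{(l)})^d$ has $i$-th entry $\bigoplus_n x_n^i$; block matrices of tuples are defined entrywise per coordinate. A set is unitarily invariant if $u^*xu$ lies in it for each of its elements $x$ and each unitary $u\in B(\mathcal H)$. NC domain: $\Omega\subset B(\mathcal H)^d$ is an NC domain if there are subsets $\Omega_1,\Omega_2,\dots$ of $\Omega$ with (1) $\Omega_k\subset\mathrm{int}\,\Omega_{k+1}$ (norm interior) and $\Omega=\bigcup_k\Omega_k$; (2) each $\Omega_k$ norm-bounded and unitarily invariant; (3) for every sequence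 $x_1,x_2,\dots$ in $\Omega_k$ of length $l\in\mathbb N\cup\{\infty\}$ there is a unitary $u:\mathcal H\to\mathcal H^{(l)}$ with $u^{-1}(\bigoplus_n x_n)u\in\Omega_k$. NC function: $f:\Omega\to B(\mathcal H)^r$ on an NC domain is NC if whenever $x,y\in\Omega$ and $s:\mathcal H\to\mathcal H^{(2)}$ is bounded, linear, invertible with $s^{-1}\begin{bmatrix}x&0\\0&y\end{bmatrix}s\in\Omega$, then $f\Big(s^{-1}\begin{bmatrix}x&0\\0&y\end{bmatrix}s\Big)=s^{-1}\begin{bmatrix}f(x)&0\\0&f(y)\end{bmatrix}s$. *)

theory Defs
  imports "HOL-Analysis.Analysis" "HOL-Library.Extended_Nat"
begin

text \<open>Concrete model: the Hilbert space H is l2(nat) over the complex numbers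
(every infinite-dimensional separable complex Hilbert space is unitarily
isomorphic to it).  H^(l) is modelled as the square-summable functions
nat \<times> nat \<Rightarrow> complex supported on {(n,m). n < l}.  Vectors are functions
'i \<Rightarrow> complex; operators are HOL functions, normalised to be zero off
their carrier.\<close>

definition sqsum :: "('i \<Rightarrow> complex) set" where
  "sqsum = {v. (\<lambda>i. (cmod (v i))^2) summable_on UNIV}"

definition vnorm :: "('i \<Rightarrow> complex) \<Rightarrow> real" where
  "vnorm v = sqrt (\<Sum>\<^sub>\<infinity>i. (cmod (v i))^2)"

definition HH :: "(nat \<Rightarrow> complex) set" where
  "HH = sqsum"

definition Hsum :: "enat \<Rightarrow> (nat \<times> nat \<Rightarrow> complex) set" where
  "Hsum l = {w. w \<in> sqsum \<and> (\<forall>n m. \<not> enat n < l \<longrightarrow> w (n, m) = 0)}"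

definition blin :: "('i \<Rightarrow> complex) set \<Rightarrow> ('j \<Rightarrow> complex) set
                      \<Rightarrow> (('i \<Rightarrow> complex) \<Rightarrow> ('j \<Rightarrow> complex)) \<Rightarrow> bool" where
  "blin A B T \<longleftrightarrow>
     (\<forall>v\<in>A. T v \<in> B) \<and>
     (\<forall>u\<in>A. \<forall>v\<in>A. \<forall>a b :: complex.
        T (\<lambda>i. a * u i + b * v i) = (\<lambda>j. a * T u j + b * T v j)) \<and>
     (\<exists>C. \<forall>v\<in>A. vnorm (T v) \<le> C * vnorm v)"

type_synonym op = "(nat \<Rightarrow> complex) \<Rightarrow> (nat \<Rightarrow> complex)"

definition zop :: "op" where
  "zop = (\<lambda>_ _. 0)"

definition Bop :: "op set" where
  "Bop = {T. blin HH HH T \<and> (\<forall>v. v \<notin> HH \<longrightarrow> T v = (\<lambda>_. 0))}"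

definition opnorm :: "op \<Rightarrow> real" where
  "opnorm T = Sup {vnorm (T v) | v. v \<in> HH \<and> vnorm v \<le> 1}"

text \<open>B(H)^d: d-tuples, represented as nat-indexed families, zero beyond d.\<close>
definition tup :: "nat \<Rightarrow> (nat \<Rightarrow> op) set" where
  "tup d = {x. (\<forall>i<d. x i \<in> Bop) \<and> (\<forall>i\<ge>d. x i = zop)}"

definition tnorm :: "nat \<Rightarrow> (nat \<Rightarrow> op) \<Rightarrow> real" where
  "tnorm d x = Max ((\<lambda>i. opnorm (x i)) ` {..<d})"

definition tdiff :: "(nat \<Rightarrow> op) \<Rightarrow> (nat \<Rightarrow> op) \<Rightarrow> (nat \<Rightarrow> op)" where
  "tdiff x y = (\<lambda>i v n. x i v n - y i v n)"

definition tint :: "nat \<Rightarrow> (nat \<Rightarrow> op) set \<Rightarrow> (nat \<Rightarrow> op) set" where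
  "tint d S = {x \<in> tup d. \<exists>e>0. \<forall>y\<in>tup d. tnorm d (tdiff y x) < e \<longrightarrow> y \<in> S}"

definition lmul :: "op \<Rightarrow> (nat \<Rightarrow> op) \<Rightarrow> (nat \<Rightarrow> op)" where
  "lmul L x = (\<lambda>i. L \<circ> x i)"

definition rmul :: "(nat \<Rightarrow> op) \<Rightarrow> op \<Rightarrow> (nat \<Rightarrow> op)" where
  "rmul x L = (\<lambda>i. x i \<circ> L)"

definition unitary_to :: "('j \<Rightarrow> complex) set \<Rightarrow> ((nat \<Rightarrow> complex) \<Rightarrow> ('j \<Rightarrow> complex)) \<Rightarrow> bool" where
  "unitary_to B u \<longleftrightarrow> blin HH B u \<and> bij_betw u HH B \<and> (\<forall>v\<in>HH. vnorm (u v) = vnorm v)"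

definition unitary_op :: "op \<Rightarrow> bool" where
  "unitary_op u \<longleftrightarrow> u \<in> Bop \<and> unitary_to HH u"

definition invertible_to :: "('j \<Rightarrow> complex) set \<Rightarrow> ((nat \<Rightarrow> complex) \<Rightarrow> ('j \<Rightarrow> complex)) \<Rightarrow> bool" where
  "invertible_to B s \<longleftrightarrow> blin HH B s \<and> bij_betw s HH B \<and> blin B HH (inv_into HH s)"

definition sim :: "((nat \<Rightarrow> complex) \<Rightarrow> ('j \<Rightarrow> complex))
                   \<Rightarrow> (nat \<Rightarrow> ('j \<Rightarrow> complex) \<Rightarrow> ('j \<Rightarrow> complex)) \<Rightarrow> (nat \<Rightarrow> op)" where
  "sim s z = (\<lambda>i v. if v \<in> HH then inv_into HH s (z i (s v)) else (\<lambda>_. 0))"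

definition dsum :: "enat \<Rightarrow> (nat \<Rightarrow> nat \<Rightarrow> op)
                    \<Rightarrow> (nat \<Rightarrow> (nat \<times> nat \<Rightarrow> complex) \<Rightarrow> (nat \<times> nat \<Rightarrow> complex))" where
  "dsum l xs = (\<lambda>i w. if w \<in> Hsum l then
      (\<lambda>(n, m). if enat n < l then xs n i (\<lambda>m'. w (n, m')) m else 0)
    else (\<lambda>_. 0))"

definition diag2 :: "(nat \<Rightarrow> op) \<Rightarrow> (nat \<Rightarrow> op)
                    \<Rightarrow> (nat \<Rightarrow> (nat \<times> nat \<Rightarrow> complex) \<Rightarrow> (nat \<times> nat \<Rightarrow> complex))" where
  "diag2 x y = dsum 2 (\<lambda>n. if n = 0 then x else y)"

definition nc_domain :: "nat \<Rightarrow> (nat \<Rightarrow> op) set \<Rightarrow> bool" where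
  "nc_domain d \<Omega> \<longleftrightarrow> \<Omega> \<subseteq> tup d \<and>
     (\<exists>\<Omega>k :: nat \<Rightarrow> (nat \<Rightarrow> op) set.
        (\<forall>k. \<Omega>k k \<subseteq> \<Omega>) \<and>
        (\<forall>k. \<Omega>k k \<subseteq> tint d (\<Omega>k (Suc k))) \<and>
        \<Omega> = (\<Union>k. \<Omega>k k) \<and>
        (\<forall>k. \<exists>C. \<forall>x\<in>\<Omega>k k. tnorm d x \<le> C) \<and>
        (\<forall>k. \<forall>x\<in>\<Omega>k k. \<forall>u. unitary_op u \<longrightarrow> sim u x \<in> \<Omega>k k) \<and>
        (\<forall>k. \<forall>l::enat. \<forall>xs. 1 \<le> l \<longrightarrow> (\<forall>n. enat n < l \<longrightarrow> xs n \<in> \<Omega>k k) \<longrightarrow>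
            (\<exists>u. unitary_to (Hsum l) u \<and> sim u (dsum l xs) \<in> \<Omega>k k)))"

definition nc_function :: "nat \<Rightarrow> nat \<Rightarrow> (nat \<Rightarrow> op) set \<Rightarrow> ((nat \<Rightarrow> op) \<Rightarrow> (nat \<Rightarrow> op)) \<Rightarrow> bool" where
  "nc_function d r \<Omega> f \<longleftrightarrow> (\<forall>x\<in>\<Omega>. f x \<in> tup r) \<and>
     (\<forall>x\<in>\<Omega>. \<forall>y\<in>\<Omega>. \<forall>s. invertible_to (Hsum 2) s \<longrightarrow> sim s (diag2 x y) \<in> \<Omega> \<longrightarrow>
         f (sim s (diag2 x y)) = sim s (diag2 (f x) (f y)))"

end

theory Submission
  imports Defs
begin

text \<open>
  Conjugating a block diagonal operator by the shear \<open>S\<^sub>M = [[1, 0], [M, 1]]\<close> on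
  \<open>H \<oplus> H\<close> gives \<open>S\<^sub>M\<^sup>-\<^sup>1 diag(X, Y) S\<^sub>M = [[X, 0], [Y M - M X, Y]]\<close>, so \<open>S\<^sub>M\<close>
  induces the trivial similarity on \<open>diag(X, Y)\<close> exactly when \<open>M\<close> intertwines \<open>X\<close> and \<open>Y\<close>.
  The NC domain axiom provides a unitary \<open>u : H \<rightarrow> H \<oplus> H\<close> with \<open>u\<^sup>-\<^sup>1 diag(x, y) u \<in> \<Omega>\<close>.
  If \<open>L x = y L\<close>, the invertible maps \<open>S\<^sub>L u\<close> and \<open>u\<close> therefore conjugate \<open>diag(x, y)\<close>
  to the same point of \<open>\<Omega>\<close>. Since \<open>f\<close> respects similarities, they also conjugate
  \<open>diag(f x, f y)\<close> to the same operator, and the lower left corner of the block identity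
  then gives \<open>f(y) L - L f(x) = 0\<close>.
\<close>

definition sqnorm :: "('i \<Rightarrow> complex) \<Rightarrow> real" where
  "sqnorm v = (\<Sum>\<^sub>\<infinity>i. (cmod (v i))^2)"

lemma vnorm_eq_sqrt_sqnorm: "vnorm v = sqrt (sqnorm v)"
  by (simp add: vnorm_def sqnorm_def)

lemma sqnorm_nonneg: "0 \<le> sqnorm v"
  unfolding sqnorm_def by (rule infsum_nonneg) auto

lemma vnorm_nonneg: "0 \<le> vnorm v"
  by (simp add: vnorm_eq_sqrt_sqnorm sqnorm_nonneg)

lemma vnorm_bound_iff_sqnorm_bound:
  "(\<exists>C. \<forall>v\<in>A. vnorm (T v) \<le> C * vnorm v) \<longleftrightarrow> (\<exists>K\<ge>0. \<forall>v\<in>A. sqnorm (T v) \<le> K * sqnorm v)"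
proof
  assume "\<exists>C. \<forall>v\<in>A. vnorm (T v) \<le> C * vnorm v"
  then obtain C where C: "\<forall>v\<in>A. vnorm (T v) \<le> C * vnorm v" by blast
  have "sqnorm (T v) \<le> C^2 * sqnorm v" if "v \<in> A" for v
  proof -
    have "(vnorm (T v))^2 \<le> (C * vnorm v)^2"
      using C that by (intro power_mono) (auto simp: vnorm_nonneg)
    thus ?thesis by (simp add: vnorm_eq_sqrt_sqnorm sqnorm_nonneg power_mult_distrib)
  qed
  thus "\<exists>K\<ge>0. \<forall>v\<in>A. sqnorm (T v) \<le> K * sqnorm v" by (intro exI[of _ "C^2"]) auto
next
  assume "\<exists>K\<ge>0. \<forall>v\<in>A. sqnorm (T v) \<le> K * sqnorm v"
  then obtain K where "K \<ge> 0" "\<forall>v\<in>A. sqnorm (T v) \<le> K * sqnorm v" by blast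
  hence "\<forall>v\<in>A. vnorm (T v) \<le> sqrt K * vnorm v"
    by (auto simp: vnorm_eq_sqrt_sqnorm real_sqrt_mult[symmetric])
  thus "\<exists>C. \<forall>v\<in>A. vnorm (T v) \<le> C * vnorm v" by blast
qed

lemma sqsum_zero [simp]: "(\<lambda>_. 0) \<in> sqsum"
  by (simp add: sqsum_def)

lemma HH_zero [simp]: "(\<lambda>_. 0) \<in> HH"
  by (simp add: HH_def)

lemma sqsum_scale:
  assumes "a \<in> sqsum"
  shows "(\<lambda>i. c * a i) \<in> sqsum" "sqnorm (\<lambda>i. c * a i) = (cmod c)^2 * sqnorm a"
proof -
  have e: "(\<lambda>i. (cmod (c * a i))^2) = (\<lambda>i. (cmod c)^2 * (cmod (a i))^2)"
    by (simp add: norm_mult power_mult_distrib)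
  show "(\<lambda>i. c * a i) \<in> sqsum"
    using assms unfolding sqsum_def mem_Collect_eq e by (rule summable_on_cmult_right)
  show "sqnorm (\<lambda>i. c * a i) = (cmod c)^2 * sqnorm a"
    unfolding sqnorm_def e by (rule infsum_cmult_right) (use assms in \<open>auto simp: sqsum_def\<close>)
qed

lemma cmod_add_squared_le: "(cmod (x + y))^2 \<le> 2 * (cmod x)^2 + 2 * (cmod y)^2"
proof -
  have "(cmod (x + y))^2 \<le> (cmod x + cmod y)^2"
    by (simp add: power_mono norm_triangle_ineq)
  also have "\<dots> \<le> 2 * (cmod x)^2 + 2 * (cmod y)^2"
    using zero_le_power2[of "cmod x - cmod y"] unfolding power2_sum power2_diff by linarith
  finally show ?thesis .
qed

lemma sqsum_add:
  assumes "a \<in> sqsum" "b \<in> sqsum"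
  shows "(\<lambda>i. a i + b i) \<in> sqsum" "sqnorm (\<lambda>i. a i + b i) \<le> 2 * sqnorm a + 2 * sqnorm b"
proof -
  have sa: "(\<lambda>i. (cmod (a i))^2) summable_on UNIV"
    and sb: "(\<lambda>i. (cmod (b i))^2) summable_on UNIV"
    using assms by (auto simp: sqsum_def)
  have s2: "(\<lambda>i. 2 * (cmod (a i))^2 + 2 * (cmod (b i))^2) summable_on UNIV"
    by (intro summable_on_add summable_on_cmult_right sa sb)
  have s1: "(\<lambda>i. (cmod (a i + b i))^2) summable_on UNIV"
    by (rule summable_on_comparison_test[OF s2]) (auto simp: cmod_add_squared_le)
  thus "(\<lambda>i. a i + b i) \<in> sqsum" by (simp add: sqsum_def)
  have "sqnorm (\<lambda>i. a i + b i) \<le> (\<Sum>\<^sub>\<infinity>i. 2 * (cmod (a i))^2 + 2 * (cmod (b i))^2)"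
    unfolding sqnorm_def by (rule infsum_mono[OF s1 s2]) (simp add: cmod_add_squared_le)
  also have "\<dots> = 2 * sqnorm a + 2 * sqnorm b"
    unfolding sqnorm_def
    using infsum_add[OF summable_on_cmult_right[OF sa, of 2] summable_on_cmult_right[OF sb, of 2]]
      infsum_cmult_right[OF sa, of 2] infsum_cmult_right[OF sb, of 2] by simp
  finally show "sqnorm (\<lambda>i. a i + b i) \<le> 2 * sqnorm a + 2 * sqnorm b" .
qed

lemma HH_add: "a \<in> HH \<Longrightarrow> b \<in> HH \<Longrightarrow> (\<lambda>i. a i + b i) \<in> HH"
  by (simp add: HH_def sqsum_add)

lemma HH_lin: "a \<in> HH \<Longrightarrow> b \<in> HH \<Longrightarrow> (\<lambda>i. \<alpha> * a i + \<beta> * b i) \<in> HH"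
  by (simp add: HH_def sqsum_add(1) sqsum_scale(1))

lemma HH_diff: "a \<in> HH \<Longrightarrow> b \<in> HH \<Longrightarrow> (\<lambda>i. a i - b i) \<in> HH"
  using HH_lin[of a b 1 "-1"] by simp

section \<open>The direct sum \<open>H \<oplus> H\<close>\<close>

lemma enat_less_2_iff [simp]: "enat n < 2 \<longleftrightarrow> n < 2"
  by (simp add: numeral_eq_enat)

definition pair2 :: "(nat \<Rightarrow> complex) \<Rightarrow> (nat \<Rightarrow> complex) \<Rightarrow> (nat \<times> nat \<Rightarrow> complex)" where
  "pair2 a b = (\<lambda>(n, m). if n = 0 then a m else if n = 1 then b m else 0)"

definition summand :: "nat \<Rightarrow> (nat \<times> nat \<Rightarrow> complex) \<Rightarrow> nat \<Rightarrow> complex" where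
  "summand n w = (\<lambda>m. w (n, m))"

lemma summand_pair2 [simp]:
  "summand 0 (pair2 a b) = a" "summand 1 (pair2 a b) = b" "summand (Suc 0) (pair2 a b) = b"
  by (auto simp: summand_def pair2_def)

lemma pair2_eq_iff: "pair2 a b = pair2 c e \<longleftrightarrow> a = c \<and> b = e"
  by (metis summand_pair2(1,2))

lemma pair2_lin:
  "pair2 (\<lambda>m. \<alpha> * a m + \<beta> * a' m) (\<lambda>m. \<alpha> * b m + \<beta> * b' m)
     = (\<lambda>p. \<alpha> * pair2 a b p + \<beta> * pair2 a' b' p)"
  by (auto simp: pair2_def fun_eq_iff)

lemma pair2_in_Hsum2:
  assumes a: "a \<in> HH" and b: "b \<in> HH"
  shows "pair2 a b \<in> Hsum 2" "sqnorm (pair2 a b) = sqnorm a + sqnorm b"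
proof -
  define g where "g = (\<lambda>p. (cmod (pair2 a b p))^2)"
  define R :: "(nat \<times> nat) set" where "R = range (Pair 0) \<union> range (Pair 1)"
  have i0: "inj (Pair (0::nat))" and i1: "inj (Pair (1::nat))" by (auto simp: inj_on_def)
  have g0: "g \<circ> Pair 0 = (\<lambda>m. (cmod (a m))^2)" and g1: "g \<circ> Pair 1 = (\<lambda>m. (cmod (b m))^2)"
    by (auto simp: g_def pair2_def)
  have s0: "g summable_on range (Pair 0)"
    using summable_on_reindex[OF i0, of g] g0 a by (simp add: HH_def sqsum_def)
  have s1: "g summable_on range (Pair 1)"
    using summable_on_reindex[OF i1, of g] g1 b by (simp add: HH_def sqsum_def)
  have disj: "range (Pair (0::nat)) \<inter> range (Pair 1) = {}" by auto
  have out: "\<And>p. p \<in> UNIV - R \<Longrightarrow> g p = 0"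
    by (auto simp: g_def pair2_def R_def split: prod.splits)
  have "g summable_on UNIV"
    using summable_on_cong_neutral[of UNIV R g g] out summable_on_Un_disjoint[OF s0 s1 disj]
    by (auto simp: R_def)
  moreover have "\<forall>n m. \<not> enat n < 2 \<longrightarrow> pair2 a b (n, m) = 0"
    by (auto simp: pair2_def)
  ultimately show "pair2 a b \<in> Hsum 2" by (simp add: Hsum_def sqsum_def g_def)
  have "sqnorm (pair2 a b) = infsum g R"
    using infsum_cong_neutral[of UNIV R g g] out by (simp add: sqnorm_def g_def)
  also have "\<dots> = infsum g (range (Pair 0)) + infsum g (range (Pair 1))"
    unfolding R_def by (rule infsum_Un_disjoint[OF s0 s1 disj])
  also have "\<dots> = sqnorm a + sqnorm b"
    using infsum_reindex[OF i0, of g] infsum_reindex[OF i1, of g] g0 g1 by (simp add: sqnorm_def)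
  finally show "sqnorm (pair2 a b) = sqnorm a + sqnorm b" .
qed

lemma Hsum2_summands:
  assumes w: "w \<in> Hsum 2"
  shows "summand 0 w \<in> HH" "summand 1 w \<in> HH" "pair2 (summand 0 w) (summand 1 w) = w"
proof -
  define g where "g = (\<lambda>p. (cmod (w p))^2)"
  have sg: "g summable_on UNIV" using w by (simp add: Hsum_def sqsum_def g_def)
  have "(\<lambda>m. (cmod (summand k w m))^2) summable_on UNIV" for k
  proof -
    have ik: "inj (Pair k)" by (auto simp: inj_on_def)
    have "g summable_on range (Pair k)" by (rule summable_on_subset_banach[OF sg]) auto
    moreover have "g \<circ> Pair k = (\<lambda>m. (cmod (summand k w m))^2)" by (auto simp: g_def summand_def)
    ultimately show ?thesis using summable_on_reindex[OF ik, of g] by simp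
  qed
  thus "summand 0 w \<in> HH" "summand 1 w \<in> HH" by (auto simp: HH_def sqsum_def)
  show "pair2 (summand 0 w) (summand 1 w) = w"
  proof
    fix p :: "nat \<times> nat"
    show "pair2 (summand 0 w) (summand 1 w) p = w p"
      using w by (cases p) (auto simp: pair2_def summand_def Hsum_def)
  qed
qed

lemma Hsum2_cases:
  assumes "w \<in> Hsum 2"
  obtains a b where "a \<in> HH" "b \<in> HH" "w = pair2 a b"
  using Hsum2_summands[OF assms] by metis

lemma Hsum2_lin:
  assumes "p \<in> Hsum 2" "q \<in> Hsum 2"
  shows "(\<lambda>i. \<alpha> * p i + \<beta> * q i) \<in> Hsum 2"
proof -
  obtain a b where "a \<in> HH" "b \<in> HH" "p = pair2 a b" using assms(1) by (rule Hsum2_cases)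
  moreover obtain a' b' where "a' \<in> HH" "b' \<in> HH" "q = pair2 a' b'"
    using assms(2) by (rule Hsum2_cases)
  ultimately show ?thesis by (simp add: pair2_lin[symmetric] pair2_in_Hsum2 HH_lin)
qed

lemma diag2_pair2:
  assumes "a \<in> HH" "b \<in> HH"
  shows "diag2 X Y i (pair2 a b) = pair2 (X i a) (Y i b)"
proof
  fix p :: "nat \<times> nat"
  have r0: "(\<lambda>m. pair2 a b (0, m)) = a" and r1: "(\<lambda>m. pair2 a b (Suc 0, m)) = b"
    by (auto simp: pair2_def)
  show "diag2 X Y i (pair2 a b) p = pair2 (X i a) (Y i b) p"
    using pair2_in_Hsum2(1)[OF assms] unfolding diag2_def dsum_def
    by (cases p) (auto simp: pair2_def r0 r1 less_2_cases_iff)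
qed

lemma blinD:
  assumes "blin A B T"
  shows "\<And>v. v \<in> A \<Longrightarrow> T v \<in> B"
    and "\<And>p q \<alpha> \<beta>. p \<in> A \<Longrightarrow> q \<in> A \<Longrightarrow> T (\<lambda>i. \<alpha> * p i + \<beta> * q i) = (\<lambda>j. \<alpha> * T p j + \<beta> * T q j)"
    and "\<exists>C. \<forall>v\<in>A. vnorm (T v) \<le> C * vnorm v"
  using assms unfolding blin_def by blast+

lemma blin_add:
  assumes "blin A B T" "p \<in> A" "q \<in> A"
  shows "T (\<lambda>i. p i + q i) = (\<lambda>j. T p j + T q j)"
  using blinD(2)[OF assms, of 1 1] by simp

lemma blin_HH_zero:
  assumes "blin HH B T"
  shows "T (\<lambda>_. 0) = (\<lambda>_. 0)"
  using blinD(2)[OF assms HH_zero HH_zero, of 0 0] by simp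

lemma vnorm_bound_comp:
  assumes "\<exists>C. \<forall>v\<in>A. vnorm (S v) \<le> C * vnorm v" and "S ` A \<subseteq> B"
    and "\<exists>C. \<forall>w\<in>B. vnorm (T w) \<le> C * vnorm w"
  shows "\<exists>C. \<forall>v\<in>A. vnorm (T (S v)) \<le> C * vnorm v"
proof -
  obtain C1 where C1: "\<forall>v\<in>A. vnorm (S v) \<le> C1 * vnorm v" using assms(1) by blast
  obtain C2 where C2: "\<forall>w\<in>B. vnorm (T w) \<le> C2 * vnorm w" using assms(3) by blast
  have "vnorm (T (S v)) \<le> max 0 C2 * C1 * vnorm v" if "v \<in> A" for v
  proof -
    have "vnorm (T (S v)) \<le> C2 * vnorm (S v)" using C2 assms(2) that by blast
    also have "\<dots> \<le> max 0 C2 * vnorm (S v)" by (rule mult_right_mono) (simp_all add: vnorm_nonneg)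
    also have "\<dots> \<le> max 0 C2 * (C1 * vnorm v)"
      using C1 that by (intro mult_left_mono) auto
    finally show ?thesis by (simp add: mult.assoc)
  qed
  thus ?thesis by blast
qed

lemma blin_comp:
  assumes "blin A B S" "blin B C T"
  shows "blin A C (T \<circ> S)"
proof -
  have "S ` A \<subseteq> B" using blinD(1)[OF assms(1)] by blast
  hence "\<exists>C. \<forall>v\<in>A. vnorm (T (S v)) \<le> C * vnorm v"
    by (rule vnorm_bound_comp[OF blinD(3)[OF assms(1)] _ blinD(3)[OF assms(2)]])
  thus ?thesis
    using blinD(1,2)[OF assms(1)] blinD(1,2)[OF assms(2)] unfolding blin_def by auto
qed

lemma blin_cong:
  assumes "blin A B T" "\<forall>v\<in>A. T v = T' v"
    and "\<And>p q \<alpha> \<beta>. p \<in> A \<Longrightarrow> q \<in> A \<Longrightarrow> (\<lambda>i. \<alpha> * p i + \<beta> * q i) \<in> A"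
  shows "blin A B T'"
proof -
  have "T' (\<lambda>i. \<alpha> * p i + \<beta> * q i) = (\<lambda>j. \<alpha> * T' p j + \<beta> * T' q j)"
    if "p \<in> A" "q \<in> A" for p q \<alpha> \<beta>
    using blinD(2)[OF assms(1) that, of \<alpha> \<beta>] assms(2) assms(3)[OF that, of \<alpha> \<beta>] that by simp
  thus ?thesis
    using blinD(1,3)[OF assms(1)] assms(2) unfolding blin_def by simp
qed

lemma uminus_uminus_op [simp]: "- (- M) = (M :: op)"
  by (simp add: fun_Compl_def)

lemma blin_HH_uminus:
  assumes "blin HH HH M"
  shows "blin HH HH (- M)"
proof -
  have "(- M) v \<in> HH" if "v \<in> HH" for v
    using HH_lin[OF blinD(1)[OF assms that] HH_zero, of "-1" 0] by (simp add: fun_Compl_def)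
  moreover have "(- M) (\<lambda>i. \<alpha> * p i + \<beta> * q i) = (\<lambda>j. \<alpha> * (- M) p j + \<beta> * (- M) q j)"
    if "p \<in> HH" "q \<in> HH" for p q \<alpha> \<beta>
    using blinD(2)[OF assms that] by (simp add: fun_eq_iff)
  moreover have "vnorm ((- M) v) = vnorm (M v)" for v
    by (simp add: vnorm_def)
  ultimately show ?thesis
    using blinD(3)[OF assms] unfolding blin_def by simp
qed

lemma inv_into_linear:
  assumes "blin HH B s" "bij_betw s HH B" "p \<in> B" "q \<in> B"
  shows "inv_into HH s (\<lambda>i. \<alpha> * p i + \<beta> * q i)
           = (\<lambda>i. \<alpha> * inv_into HH s p i + \<beta> * inv_into HH s q i)"
proof (rule inv_into_f_eq)
  have img: "s ` HH = B" using assms(2) by (rule bij_betw_imp_surj_on)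
  have p: "inv_into HH s p \<in> HH" "s (inv_into HH s p) = p"
    using assms(3) img inv_into_into[of p s HH] f_inv_into_f[of p s HH] by auto
  have q: "inv_into HH s q \<in> HH" "s (inv_into HH s q) = q"
    using assms(4) img inv_into_into[of q s HH] f_inv_into_f[of q s HH] by auto
  show "inj_on s HH" using assms(2) by (rule bij_betw_imp_inj_on)
  show "(\<lambda>i. \<alpha> * inv_into HH s p i + \<beta> * inv_into HH s q i) \<in> HH"
    using p(1) q(1) by (rule HH_lin)
  show "s (\<lambda>i. \<alpha> * inv_into HH s p i + \<beta> * inv_into HH s q i) = (\<lambda>i. \<alpha> * p i + \<beta> * q i)"
    using blinD(2)[OF assms(1) p(1) q(1)] p(2) q(2) by simp
qed

lemma invertible_toI:
  assumes "blin HH B s" "bij_betw s HH B"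
    and "\<exists>C. \<forall>w\<in>B. vnorm (inv_into HH s w) \<le> C * vnorm w"
  shows "invertible_to B s"
proof -
  have "\<forall>w\<in>B. inv_into HH s w \<in> HH"
    using assms(2) by (simp add: bij_betw_imp_surj_on inv_into_into)
  thus ?thesis
    using assms inv_into_linear[OF assms(1,2)] unfolding invertible_to_def blin_def by blast
qed

lemma unitary_to_imp_invertible_to:
  assumes "unitary_to B u"
  shows "invertible_to B u"
proof (rule invertible_toI)
  show "blin HH B u" and bij: "bij_betw u HH B" using assms by (auto simp: unitary_to_def)
  have "vnorm (inv_into HH u w) = vnorm w" if "w \<in> B" for w
  proof -
    have "inv_into HH u w \<in> HH" "u (inv_into HH u w) = w"
      using that bij by (auto simp: bij_betw_imp_surj_on inv_into_into f_inv_into_f)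
    thus ?thesis using assms by (metis unitary_to_def)
  qed
  thus "\<exists>C. \<forall>w\<in>B. vnorm (inv_into HH u w) \<le> C * vnorm w" by (intro exI[of _ 1]) simp
qed

lemma inv_into_comp_bij:
  assumes "bij_betw s A B" "bij_betw T B C" "w \<in> C"
  shows "inv_into A (T \<circ> s) w = inv_into A s (inv_into B T w)"
  using inv_into_comp[of T s A w] assms by (simp add: bij_betw_def)

lemma invertible_to_comp:
  assumes s: "invertible_to B s"
    and T: "bij_betw T B B" "blin B B T" "blin B B (inv_into B T)"
  shows "invertible_to B (T \<circ> s)"
proof (rule invertible_toI)
  have bl: "blin HH B s" and bij: "bij_betw s HH B" and inv: "blin B HH (inv_into HH s)"
    using s by (auto simp: invertible_to_def)
  show "blin HH B (T \<circ> s)" using bl T(2) by (rule blin_comp)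
  show "bij_betw (T \<circ> s) HH B" using bij T(1) by (rule bij_betw_trans)
  have "inv_into HH (T \<circ> s) w = inv_into HH s (inv_into B T w)" if "w \<in> B" for w
    using bij T(1) that by (rule inv_into_comp_bij)
  moreover have "\<exists>C. \<forall>w\<in>B. vnorm (inv_into HH s (inv_into B T w)) \<le> C * vnorm w"
    using blinD(1)[OF T(3)]
    by (intro vnorm_bound_comp[OF blinD(3)[OF T(3)] _ blinD(3)[OF inv]]) blast
  ultimately show "\<exists>C. \<forall>w\<in>B. vnorm (inv_into HH (T \<circ> s) w) \<le> C * vnorm w" by simp
qed

lemma zop_in_Bop: "zop \<in> Bop"
  by (auto simp: Bop_def blin_def zop_def vnorm_def intro: exI[of _ 0])

lemma tup_entry_in_Bop: "X \<in> tup d \<Longrightarrow> X i \<in> Bop"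
  by (cases "i < d") (auto simp: tup_def zop_in_Bop)

lemma lmul_eq_rmul_iff:
  assumes L: "L \<in> Bop" and X: "\<And>i. X i \<in> Bop" and Y: "\<And>i. Y i \<in> Bop"
  shows "lmul L X = rmul Y L \<longleftrightarrow> (\<forall>i. \<forall>a\<in>HH. Y i (L a) = L (X i a))"
proof
  assume "lmul L X = rmul Y L"
  thus "\<forall>i. \<forall>a\<in>HH. Y i (L a) = L (X i a)" by (simp add: lmul_def rmul_def fun_eq_iff)
next
  assume intertwine: "\<forall>i. \<forall>a\<in>HH. Y i (L a) = L (X i a)"
  have "L (X i v) = Y i (L v)" for i v
  proof (cases "v \<in> HH")
    case True thus ?thesis using intertwine by simp
  next
    case False
    have "blin HH HH L" "blin HH HH (Y i)" using L Y by (simp_all add: Bop_def)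
    thus ?thesis using False L X[of i] by (simp add: Bop_def blin_HH_zero)
  qed
  thus "lmul L X = rmul Y L" by (simp add: lmul_def rmul_def fun_eq_iff)
qed

section \<open>Shears\<close>

definition shear :: "op \<Rightarrow> (nat \<times> nat \<Rightarrow> complex) \<Rightarrow> (nat \<times> nat \<Rightarrow> complex)" where
  "shear M w = pair2 (summand 0 w) (\<lambda>m. summand 1 w m + M (summand 0 w) m)"

lemma shear_pair2 [simp]: "shear M (pair2 a b) = pair2 a (\<lambda>m. b m + M a m)"
  by (simp add: shear_def)

lemma shear_uminus_shear:
  assumes "w \<in> Hsum 2"
  shows "shear (- M) (shear M w) = w"
proof -
  obtain a b where "w = pair2 a b" using assms by (rule Hsum2_cases)
  thus ?thesis by simp
qed

lemma shear_in_Hsum2: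
  assumes "blin HH HH M" "w \<in> Hsum 2"
  shows "shear M w \<in> Hsum 2"
proof -
  obtain a b where "a \<in> HH" "b \<in> HH" "w = pair2 a b" using assms(2) by (rule Hsum2_cases)
  thus ?thesis using blinD(1)[OF assms(1)] by (simp add: pair2_in_Hsum2 HH_add)
qed

lemma blin_shear:
  assumes M: "blin HH HH M"
  shows "blin (Hsum 2) (Hsum 2) (shear M)"
proof -
  have lin: "shear M (\<lambda>i. \<alpha> * p i + \<beta> * q i) = (\<lambda>j. \<alpha> * shear M p j + \<beta> * shear M q j)"
    if p: "p \<in> Hsum 2" and q: "q \<in> Hsum 2" for p q \<alpha> \<beta>
  proof -
    obtain a b where ab: "a \<in> HH" "b \<in> HH" "p = pair2 a b" using p by (rule Hsum2_cases)
    obtain a' b' where ab': "a' \<in> HH" "b' \<in> HH" "q = pair2 a' b'" using q by (rule Hsum2_cases)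
    show ?thesis
      using blinD(2)[OF M ab(1) ab'(1)]
      by (simp add: ab(3) ab'(3) pair2_lin[symmetric] algebra_simps)
  qed
  obtain K where K: "K \<ge> 0" "\<forall>v\<in>HH. sqnorm (M v) \<le> K * sqnorm v"
    using blinD(3)[OF M] vnorm_bound_iff_sqnorm_bound by blast
  have "sqnorm (shear M w) \<le> (3 + 2 * K) * sqnorm w" if w: "w \<in> Hsum 2" for w
  proof -
    obtain a b where a: "a \<in> HH" and b: "b \<in> HH" and w: "w = pair2 a b"
      using w by (rule Hsum2_cases)
    have Ma: "M a \<in> HH" using blinD(1)[OF M a] .
    have "sqnorm (shear M w) = sqnorm a + sqnorm (\<lambda>m. b m + M a m)"
      unfolding w shear_pair2 by (rule pair2_in_Hsum2(2)[OF a HH_add[OF b Ma]])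
    also have "\<dots> \<le> sqnorm a + 2 * sqnorm b + 2 * (K * sqnorm a)"
      using sqsum_add(2)[of b "M a"] b Ma K(2) a by (fastforce simp: HH_def)
    also have "\<dots> \<le> (3 + 2 * K) * (sqnorm a + sqnorm b)"
      using sqnorm_nonneg[of a] sqnorm_nonneg[of b] K(1) by (simp add: algebra_simps)
    also have "sqnorm a + sqnorm b = sqnorm w" using pair2_in_Hsum2(2)[OF a b] w by simp
    finally show ?thesis .
  qed
  hence "\<exists>C. \<forall>w\<in>Hsum 2. vnorm (shear M w) \<le> C * vnorm w"
    using K(1) vnorm_bound_iff_sqnorm_bound[of "Hsum 2" "shear M"]
    by (auto intro!: exI[of _ "3 + 2 * K"])
  thus ?thesis using shear_in_Hsum2[OF M] lin unfolding blin_def by blast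
qed

lemma bij_betw_shear:
  assumes "blin HH HH M"
  shows "bij_betw (shear M) (Hsum 2) (Hsum 2)"
  using shear_uminus_shear[of _ M] shear_uminus_shear[of _ "- M"]
    shear_in_Hsum2[OF assms] shear_in_Hsum2[OF blin_HH_uminus[OF assms]]
  by (intro bij_betw_byWitness[where f' = "shear (- M)"]) auto

lemma inv_into_shear:
  assumes "blin HH HH M" "w \<in> Hsum 2"
  shows "inv_into (Hsum 2) (shear M) w = shear (- M) w"
  using shear_uminus_shear[OF assms(2), of "- M"]
    shear_in_Hsum2[OF blin_HH_uminus[OF assms(1)] assms(2)]
  by (intro inv_into_f_eq bij_betw_imp_inj_on[OF bij_betw_shear[OF assms(1)]]) auto

lemma invertible_to_shear_comp:
  assumes "unitary_to (Hsum 2) u" "blin HH HH M"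
  shows "invertible_to (Hsum 2) (shear M \<circ> u)"
proof (rule invertible_to_comp)
  show "invertible_to (Hsum 2) u" using assms(1) by (rule unitary_to_imp_invertible_to)
  show "bij_betw (shear M) (Hsum 2) (Hsum 2)" using assms(2) by (rule bij_betw_shear)
  show "blin (Hsum 2) (Hsum 2) (shear M)" using assms(2) by (rule blin_shear)
  show "blin (Hsum 2) (Hsum 2) (inv_into (Hsum 2) (shear M))"
    by (rule blin_cong[OF blin_shear[OF blin_HH_uminus[OF assms(2)]]])
      (auto simp: inv_into_shear[OF assms(2)] Hsum2_lin)
qed

lemma sim_apply: "v \<in> HH \<Longrightarrow> sim s z i v = inv_into HH s (z i (s v))"
  by (simp add: sim_def)

lemma sim_shear_comp_diag2:
  assumes u: "unitary_to (Hsum 2) u" and M: "blin HH HH M" and X: "X i \<in> Bop" and Y: "Y i \<in> Bop"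
    and v: "v \<in> HH" "u v = pair2 a b" and a: "a \<in> HH" and b: "b \<in> HH"
  shows "sim (shear M \<circ> u) (diag2 X Y) i v
           = inv_into HH u (pair2 (X i a) (\<lambda>m. Y i b m + Y i (M a) m - M (X i a) m))"
proof -
  have bij_u: "bij_betw u HH (Hsum 2)" using u by (simp add: unitary_to_def)
  have Ma: "M a \<in> HH" using blinD(1)[OF M a] .
  have Xi: "blin HH HH (X i)" and Yi: "blin HH HH (Y i)" using X Y by (simp_all add: Bop_def)
  define z where "z = pair2 (X i a) (\<lambda>m. Y i b m + Y i (M a) m)"
  have dz: "diag2 X Y i ((shear M \<circ> u) v) = z"
    using diag2_pair2[OF a HH_add[OF b Ma]] blin_add[OF Yi b Ma] by (simp add: v z_def)
  have z: "z \<in> Hsum 2"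
    unfolding z_def
    using pair2_in_Hsum2(1)[OF blinD(1)[OF Xi a] HH_add[OF blinD(1)[OF Yi b] blinD(1)[OF Yi Ma]]] .
  have "sim (shear M \<circ> u) (diag2 X Y) i v = inv_into HH (shear M \<circ> u) z"
    using dz by (simp add: sim_apply[OF v(1)])
  also have "\<dots> = inv_into HH u (inv_into (Hsum 2) (shear M) z)"
    by (rule inv_into_comp_bij[OF bij_u bij_betw_shear[OF M] z])
  also have "\<dots> = inv_into HH u (shear (- M) z)"
    by (simp add: inv_into_shear[OF M z])
  finally show ?thesis by (simp add: z_def)
qed

lemma sim_shear_comp_diag2_eq_iff:
  assumes u: "unitary_to (Hsum 2) u" and M: "blin HH HH M"
    and X: "\<And>i. X i \<in> Bop" and Y: "\<And>i. Y i \<in> Bop"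
  shows "sim (shear M \<circ> u) (diag2 X Y) = sim u (diag2 X Y) \<longleftrightarrow> (\<forall>i. \<forall>a\<in>HH. Y i (M a) = M (X i a))"
proof -
  have bij_u: "bij_betw u HH (Hsum 2)" using u by (simp add: unitary_to_def)
  have img: "u ` HH = Hsum 2" using bij_u by (rule bij_betw_imp_surj_on)
  have Xi: "blin HH HH (X i)" and Yi: "blin HH HH (Y i)" for i using X Y by (simp_all add: Bop_def)
  have sim_u: "sim u (diag2 X Y) i v = inv_into HH u (pair2 (X i a) (Y i b))"
    if "v \<in> HH" "u v = pair2 a b" "a \<in> HH" "b \<in> HH" for i v a b
    using that by (simp add: sim_apply diag2_pair2)
  show ?thesis
  proof
    assume eq: "sim (shear M \<circ> u) (diag2 X Y) = sim u (diag2 X Y)"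
    show "\<forall>i. \<forall>a\<in>HH. Y i (M a) = M (X i a)"
    proof (intro allI ballI)
      fix i a assume a: "a \<in> HH"
      have "pair2 a (\<lambda>_. 0) \<in> u ` HH" using pair2_in_Hsum2(1)[OF a HH_zero] img by simp
      then obtain v where v: "v \<in> HH" "u v = pair2 a (\<lambda>_. 0)" by (metis imageE)
      have Y0: "Y i (\<lambda>_. 0) = (\<lambda>_. 0)" using Yi by (rule blin_HH_zero)
      have Ma: "M a \<in> HH" using blinD(1)[OF M a] .
      have Xa: "X i a \<in> HH" using blinD(1)[OF Xi a] .
      have XMa: "M (X i a) \<in> HH" using blinD(1)[OF M Xa] .
      have "sim (shear M \<circ> u) (diag2 X Y) i v = sim u (diag2 X Y) i v" using eq by simp
      hence inv_eq: "inv_into HH u (pair2 (X i a) (\<lambda>m. Y i (M a) m - M (X i a) m))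
               = inv_into HH u (pair2 (X i a) (\<lambda>_. 0))"
        unfolding sim_shear_comp_diag2[OF u M X Y v a HH_zero] sim_u[OF v a HH_zero] Y0 by simp
      have "inj_on (inv_into HH u) (Hsum 2)" by (rule inj_on_inv_into) (simp add: img)
      moreover note inv_eq
      moreover have "pair2 (X i a) (\<lambda>m. Y i (M a) m - M (X i a) m) \<in> Hsum 2"
        using Xa HH_diff[OF blinD(1)[OF Yi Ma] XMa] by (rule pair2_in_Hsum2(1))
      moreover have "pair2 (X i a) (\<lambda>_. 0) \<in> Hsum 2" using Xa HH_zero by (rule pair2_in_Hsum2(1))
      ultimately have "pair2 (X i a) (\<lambda>m. Y i (M a) m - M (X i a) m) = pair2 (X i a) (\<lambda>_. 0)"
        by (rule inj_onD)
      hence "(\<lambda>m. Y i (M a) m - M (X i a) m) = (\<lambda>_. 0)" by (simp add: pair2_eq_iff)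
      thus "Y i (M a) = M (X i a)" by (simp add: fun_eq_iff)
    qed
  next
    assume intertwine: "\<forall>i. \<forall>a\<in>HH. Y i (M a) = M (X i a)"
    show "sim (shear M \<circ> u) (diag2 X Y) = sim u (diag2 X Y)"
    proof (rule ext, rule ext)
      fix i v
      show "sim (shear M \<circ> u) (diag2 X Y) i v = sim u (diag2 X Y) i v"
      proof (cases "v \<in> HH")
        case True
        have "u v \<in> Hsum 2" using bij_betwE[OF bij_u] True by blast
        then obtain a b where "a \<in> HH" "b \<in> HH" "u v = pair2 a b" by (rule Hsum2_cases)
        thus ?thesis
          using sim_shear_comp_diag2[OF u M X Y True] sim_u[OF True] intertwine by simp
      next
        case False
        thus ?thesis by (simp add: sim_def)
      qed
    qed
  qed
qed

lemma opnorm_zero: "opnorm (\<lambda>v n. 0) = 0"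
proof -
  have "{vnorm ((\<lambda>n::nat. 0::complex)) | v::nat \<Rightarrow> complex. v \<in> HH \<and> vnorm v \<le> 1} = {0}"
    by (auto simp: vnorm_def intro: exI[of _ "\<lambda>_. 0"])
  thus ?thesis by (simp add: opnorm_def)
qed

lemma tint_subset:
  assumes "1 \<le> d"
  shows "tint d S \<subseteq> S"
proof
  fix x assume "x \<in> tint d S"
  then obtain e where "x \<in> tup d" "e > 0" "\<forall>y\<in>tup d. tnorm d (tdiff y x) < e \<longrightarrow> y \<in> S"
    by (auto simp: tint_def)
  moreover have "tnorm d (tdiff x x) = 0"
    using assms
    by (simp add: tnorm_def tdiff_def opnorm_zero image_constant_conv lessThan_empty_iff)
  ultimately show "x \<in> S" by auto
qed

lemma nc_domain_diag2_unitary: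
  assumes "1 \<le> d" "nc_domain d \<Omega>" "x \<in> \<Omega>" "y \<in> \<Omega>"
  obtains u where "unitary_to (Hsum 2) u" "sim u (diag2 x y) \<in> \<Omega>"
proof -
  obtain \<Omega>k :: "nat \<Rightarrow> (nat \<Rightarrow> op) set" where
    sub: "\<forall>k. \<Omega>k k \<subseteq> \<Omega>" and int: "\<forall>k. \<Omega>k k \<subseteq> tint d (\<Omega>k (Suc k))" and union: "\<Omega> = (\<Union>k. \<Omega>k k)"
    and dsums: "\<forall>k. \<forall>l::enat. \<forall>xs. 1 \<le> l \<longrightarrow> (\<forall>n. enat n < l \<longrightarrow> xs n \<in> \<Omega>k k) \<longrightarrow>
            (\<exists>u. unitary_to (Hsum l) u \<and> sim u (dsum l xs) \<in> \<Omega>k k)"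
    using assms(2) unfolding nc_domain_def by blast
  have "mono \<Omega>k"
    using int tint_subset[OF assms(1)] by (intro incseq_SucI) blast
  moreover obtain k1 k2 where "x \<in> \<Omega>k k1" "y \<in> \<Omega>k k2" using assms(3,4) union by blast
  ultimately have xk2: "x \<in> \<Omega>k (max k1 k2)" "y \<in> \<Omega>k (max k1 k2)"
    by (meson max.cobounded1 max.cobounded2 monoD subsetD)+
  define xs :: "nat \<Rightarrow> nat \<Rightarrow> op" where "xs = (\<lambda>n. if n = 0 then x else y)"
  have "\<forall>n. enat n < 2 \<longrightarrow> xs n \<in> \<Omega>k (max k1 k2)" using xk2 by (simp add: xs_def)
  then obtain u where "unitary_to (Hsum 2) u" "sim u (dsum 2 xs) \<in> \<Omega>k (max k1 k2)"
    using dsums[THEN spec, of "max k1 k2", THEN spec, of 2, THEN spec, of xs] by auto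
  moreover have "dsum 2 xs = diag2 x y" by (simp add: diag2_def xs_def)
  ultimately show ?thesis using that sub by auto
qed

theorem mainTheorem7:
  fixes d r :: nat and \<Omega> :: "(nat \<Rightarrow> op) set"
    and f :: "(nat \<Rightarrow> op) \<Rightarrow> (nat \<Rightarrow> op)"
    and x y :: "nat \<Rightarrow> op" and L :: op
  assumes "1 \<le> d" and "1 \<le> r"
    and "nc_domain d \<Omega>" and "nc_function d r \<Omega> f"
    and "x \<in> \<Omega>" and "y \<in> \<Omega>" and "L \<in> Bop"
    and "lmul L x = rmul y L"
  shows "lmul L (f x) = rmul (f y) L"
proof -
  obtain u where u: "unitary_to (Hsum 2) u" and u_in: "sim u (diag2 x y) \<in> \<Omega>"
    using assms(1,3,5,6) by (rule nc_domain_diag2_unitary)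
  have L: "blin HH HH L" using assms(7) by (simp add: Bop_def)
  have x: "x i \<in> Bop" and y: "y i \<in> Bop" and fx: "f x i \<in> Bop" and fy: "f y i \<in> Bop" for i
    using assms(3-6) by (auto simp: nc_domain_def nc_function_def intro: tup_entry_in_Bop)
  define s where "s = shear L \<circ> u"
  have s_fixes: "sim s (diag2 x y) = sim u (diag2 x y)"
    unfolding s_def sim_shear_comp_diag2_eq_iff[OF u L x y]
    using assms(8) lmul_eq_rmul_iff[OF assms(7) x y] by simp
  have "sim s (diag2 (f x) (f y)) = f (sim s (diag2 x y))"
    using assms(4-6) invertible_to_shear_comp[OF u L] s_fixes u_in
    unfolding nc_function_def s_def by (metis (no_types, lifting))
  also have "\<dots> = f (sim u (diag2 x y))" by (simp only: s_fixes)
  also have "\<dots> = sim u (diag2 (f x) (f y))"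
    using assms(4-6) unitary_to_imp_invertible_to[OF u] u_in unfolding nc_function_def by blast
  finally show ?thesis
    unfolding lmul_eq_rmul_iff[OF assms(7) fx fy]
    by (simp add: sim_shear_comp_diag2_eq_iff[OF u L fx fy, symmetric] s_def)
qed

end
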